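(* Let $\{\Theta_n\}_{n\ge0}$ be an insertional family of lattice congruences, $\Theta_n$ a congruence on the weak order on $S_n$. Then the injective linear map $c:\mathbb{K}[Z^\Theta_\infty]\to\mathbb{K}[S_\infty]$ satisfies $(c\otimes c)\circ\Delta_Z=\Delta_S\circ c$, so $c$ embeds $(\mathbb{K}[Z^\Theta_\infty],\Delta_Z)$ as a subcoalgebra of $(\mathbb{K}[S_\infty],\Delta_S)$.
   Context: $S_n$ is the set of permutations of $[n]$ in one-line notation $x=x_1\cdots x_n$ with the (right) weak order ($x\le y$ iff the set of inverted value pairs of $x$ is contained in that of $y$), a lattice. The standardization $\mathrm{st}(a_1,\dots,a_k)$ of a sequence of distinct integers is the $u\in S_k$ with $u_i<u_j\iff a_i<a_j$ ($\mathrm{st}$ of the empty sequence is the empty permutation in $S_0$). For a congruence $\Theta_n$ on $S_n$, $\pi_\downarrow x$ is the minimum of the class of $x$. Insertional: for all $p,q\ge0$ and every $p$-element subset $Q\subseteq[p+q]$, let $\varphi_Q:S_p\times S_q\to S_{p+q}$ send $(u,v)$ to the unique $x$ with $\{x_1,\dots,x_p\}=Q$, $\mathrm{st}(x_1,\dots,x_p)=u$, $\mathrm{st}(x_{p+1},\dots,x_{p+q})=v$; the family is insertional if whenever $u\equiv u'\pmod{\Theta_p}$ and $v\equiv v'\pmod{\Theta_q}$, then $\varphi_Q(u,v)\equiv\varphi_Q(u',v')\pmod{\Theta_{p+q}}$. $\mathbb{K}$ is a field; $\mathbb{K}[S_\infty]=\bigoplus_n\mathbb{K}[S_n]$ with Malvenuto–Reutenauer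 coproduct $\Delta_S(x)=\sum_{p=0}^n\mathrm{st}(x_1,\dots,x_p)\otimes\mathrm{st}(x_{p+1},\dots,x_n)$. Let $Z_n=\{x\in S_n:\pi_\downarrow x=x\}$, $\mathbb{K}[Z^\Theta_\infty]=\bigoplus_n\mathbb{K}[Z_n]$. The map $c$ sends $x\in Z_n$ to the sum of the elements of its $\Theta_n$-class; $r:\mathbb{K}[S_\infty]\to\mathbb{K}[Z^\Theta_\infty]$ is the linear map fixing $x$ if $\pi_\downarrow x=x$ and sending $x$ to $0$ otherwise. The coproduct on $\mathbb{K}[Z^\Theta_\infty]$ is $\Delta_Z=(r\otimes r)\circ\Delta_S\circ c$. *)

theory Defs
  imports Main "HOL-Library.Poly_Mapping"
begin

text \<open>Permutations of [n] in one-line notation, as lists over {1..n}. S_0 = {[]}.\<close>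
definition perms :: "nat \<Rightarrow> nat list set" where
  "perms n = {x. distinct x \<and> set x = {1..n}}"

definition inv_set :: "nat list \<Rightarrow> (nat \<times> nat) set" where
  "inv_set x = {(a, b). \<exists>i j. i < j \<and> j < length x \<and> x ! i = b \<and> x ! j = a \<and> a < b}"

definition weak_le :: "nat list \<Rightarrow> nat list \<Rightarrow> bool" where
  "weak_le x y \<longleftrightarrow> inv_set x \<subseteq> inv_set y"

definition weak_join :: "nat \<Rightarrow> nat list \<Rightarrow> nat list \<Rightarrow> nat list" where
  "weak_join n x y = (THE z. z \<in> perms n \<and> weak_le x z \<and> weak_le y z \<and>
      (\<forall>w\<in>perms n. weak_le x w \<and> weak_le y w \<longrightarrow> weak_le z w))"

definition weak_meet :: "nat \<Rightarrow> nat list \<Rightarrow> nat list \<Rightarrow> nat list" where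
  "weak_meet n x y = (THE z. z \<in> perms n \<and> weak_le z x \<and> weak_le z y \<and>
      (\<forall>w\<in>perms n. weak_le w x \<and> weak_le w y \<longrightarrow> weak_le w z))"

definition lattice_congruence :: "nat \<Rightarrow> (nat list \<times> nat list) set \<Rightarrow> bool" where
  "lattice_congruence n R \<longleftrightarrow> equiv (perms n) R \<and>
     (\<forall>x x' y y'. (x, x') \<in> R \<longrightarrow> (y, y') \<in> R \<longrightarrow>
        (weak_join n x y, weak_join n x' y') \<in> R \<and> (weak_meet n x y, weak_meet n x' y') \<in> R)"

definition st :: "nat list \<Rightarrow> nat list" where
  "st xs = map (\<lambda>a. card {b \<in> set xs. b \<le> a}) xs"

definition phi :: "nat set \<Rightarrow> nat \<Rightarrow> nat \<Rightarrow> nat list \<Rightarrow> nat list \<Rightarrow> nat list" where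
  "phi Q p q u v = (THE x. x \<in> perms (p + q) \<and> set (take p x) = Q \<and>
      st (take p x) = u \<and> st (drop p x) = v)"

definition insertional :: "(nat \<Rightarrow> (nat list \<times> nat list) set) \<Rightarrow> bool" where
  "insertional \<Theta> \<longleftrightarrow> (\<forall>p q Q u u' v v'. Q \<subseteq> {1..p+q} \<longrightarrow> card Q = p \<longrightarrow>
      u \<in> perms p \<longrightarrow> u' \<in> perms p \<longrightarrow> v \<in> perms q \<longrightarrow> v' \<in> perms q \<longrightarrow>
      (u, u') \<in> \<Theta> p \<longrightarrow> (v, v') \<in> \<Theta> q \<longrightarrow>
      (phi Q p q u v, phi Q p q u' v') \<in> \<Theta> (p + q))"

definition pi_down :: "(nat \<Rightarrow> (nat list \<times> nat list) set) \<Rightarrow> nat list \<Rightarrow> nat list" where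
  "pi_down \<Theta> x = (THE z. (x, z) \<in> \<Theta> (length x) \<and>
      (\<forall>w. (x, w) \<in> \<Theta> (length x) \<longrightarrow> weak_le z w))"

definition Zset :: "(nat \<Rightarrow> (nat list \<times> nat list) set) \<Rightarrow> nat \<Rightarrow> nat list set" where
  "Zset \<Theta> n = {x \<in> perms n. pi_down \<Theta> x = x}"

definition Zall :: "(nat \<Rightarrow> (nat list \<times> nat list) set) \<Rightarrow> nat list set" where
  "Zall \<Theta> = (\<Union>n. Zset \<Theta> n)"

definition Sall :: "nat list set" where
  "Sall = (\<Union>n. perms n)"

text \<open>K[X] is modelled as finitely supported functions from X to K whose support lies in X;
  K[X] \<otimes> K[Y] as finitely supported functions on X \<times> Y (basis u \<otimes> v = single (u,v) 1).\<close>

definition smult_pm :: "'k::field \<Rightarrow> ('a \<Rightarrow>\<^sub>0 'k) \<Rightarrow> ('a \<Rightarrow>\<^sub>0 'k)" where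
  "smult_pm a f = Poly_Mapping.map (\<lambda>c. a * c) f"

definition lin_ext :: "('a \<Rightarrow> ('b \<Rightarrow>\<^sub>0 'k::field)) \<Rightarrow> ('a \<Rightarrow>\<^sub>0 'k) \<Rightarrow> ('b \<Rightarrow>\<^sub>0 'k)" where
  "lin_ext g f = (\<Sum>x\<in>Poly_Mapping.keys f. smult_pm (Poly_Mapping.lookup f x) (g x))"

definition tensor :: "('a \<Rightarrow>\<^sub>0 'k::field) \<Rightarrow> ('b \<Rightarrow>\<^sub>0 'k) \<Rightarrow> ('a \<times> 'b \<Rightarrow>\<^sub>0 'k)" where
  "tensor f g = (\<Sum>x\<in>Poly_Mapping.keys f. \<Sum>y\<in>Poly_Mapping.keys g. Poly_Mapping.single (x, y) (Poly_Mapping.lookup f x * Poly_Mapping.lookup g y))"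

definition tensor_map ::
  "(('a \<Rightarrow>\<^sub>0 'k::field) \<Rightarrow> ('c \<Rightarrow>\<^sub>0 'k)) \<Rightarrow> (('b \<Rightarrow>\<^sub>0 'k) \<Rightarrow> ('d \<Rightarrow>\<^sub>0 'k))
     \<Rightarrow> ('a \<times> 'b \<Rightarrow>\<^sub>0 'k) \<Rightarrow> ('c \<times> 'd \<Rightarrow>\<^sub>0 'k)" where
  "tensor_map F G = lin_ext (\<lambda>(u, v). tensor (F (Poly_Mapping.single u 1)) (G (Poly_Mapping.single v 1)))"

definition Delta_S :: "(nat list \<Rightarrow>\<^sub>0 'k::field) \<Rightarrow> (nat list \<times> nat list \<Rightarrow>\<^sub>0 'k)" where
  "Delta_S = lin_ext (\<lambda>x. \<Sum>p\<in>{0..length x}. Poly_Mapping.single (st (take p x), st (drop p x)) 1)"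

definition cmap :: "(nat \<Rightarrow> (nat list \<times> nat list) set) \<Rightarrow> (nat list \<Rightarrow>\<^sub>0 'k::field) \<Rightarrow> (nat list \<Rightarrow>\<^sub>0 'k)" where
  "cmap \<Theta> = lin_ext (\<lambda>x. \<Sum>y\<in>{y \<in> perms (length x). (x, y) \<in> \<Theta> (length x)}. Poly_Mapping.single y 1)"

definition rmap :: "(nat \<Rightarrow> (nat list \<times> nat list) set) \<Rightarrow> (nat list \<Rightarrow>\<^sub>0 'k::field) \<Rightarrow> (nat list \<Rightarrow>\<^sub>0 'k)" where
  "rmap \<Theta> = lin_ext (\<lambda>x. if pi_down \<Theta> x = x then Poly_Mapping.single x 1 else 0)"

definition Delta_Z :: "(nat \<Rightarrow> (nat list \<times> nat list) set) \<Rightarrow> (nat list \<Rightarrow>\<^sub>0 'k::field) \<Rightarrow> (nat list \<times> nat list \<Rightarrow>\<^sub>0 'k)" where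
  "Delta_Z \<Theta> = tensor_map (rmap \<Theta>) (rmap \<Theta>) \<circ> Delta_S \<circ> cmap \<Theta>"

end

theory Submission
  imports Defs
begin

text \<open>
  The coefficient of \<open>a \<otimes> b\<close> in \<open>\<Delta>\<^sub>S (c x)\<close> is the number of permutations \<open>y\<close> in
  the class of \<open>x\<close> whose first \<open>|a|\<close> letters standardize to \<open>a\<close> and whose remaining
  letters standardize to \<open>b\<close>. Such a \<open>y\<close> is \<open>\<phi>\<^sub>Q(a, b)\<close> for exactly one \<open>Q\<close> (the set of
  its first \<open>|a|\<close> values), so the coefficient counts the \<open>Q\<close> with \<open>\<phi>\<^sub>Q(a, b) \<equiv> x\<close>, and
  by insertionality this count is unchanged when \<open>a\<close> and \<open>b\<close> are replaced by congruent
  permutations. An element of \<open>K[S] \<otimes> K[S]\<close> that is constant on products of classes is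
  recovered by keeping its coefficients at pairs of class minima (\<open>r \<otimes> r\<close>) and spreading
  them over the classes again (\<open>c \<otimes> c\<close>). Injectivity of \<open>c\<close> holds because the class of a
  minimum contains no other minimum.

  Class minima exist because a class of a lattice congruence is closed under meets. Meets
  in the weak order exist because the non-inversion set of the meet of \<open>x\<close> and \<open>y\<close> is
  the transitive closure of the union of their non-inversion sets.
\<close>

section \<open>Precedence, inversions and meets in the weak order\<close>

definition precedes :: "nat list \<Rightarrow> nat \<Rightarrow> nat \<Rightarrow> bool" where
  "precedes x a b \<longleftrightarrow> (\<exists>i j. i < j \<and> j < length x \<and> x ! i = a \<and> x ! j = b)"

lemma precedes_nth: "i < j \<Longrightarrow> j < length x \<Longrightarrow> precedes x (x ! i) (x ! j)"
  unfolding precedes_def by blast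

lemma precedes_set: "precedes x a b \<Longrightarrow> a \<in> set x \<and> b \<in> set x"
  unfolding precedes_def by auto

lemma precedes_irrefl: "distinct x \<Longrightarrow> \<not> precedes x a a"
  unfolding precedes_def by (metis nth_eq_iff_index_eq order_less_irrefl order.strict_trans)

lemma precedes_asym: "distinct x \<Longrightarrow> precedes x a b \<Longrightarrow> \<not> precedes x b a"
  unfolding precedes_def by (metis nth_eq_iff_index_eq order_less_asym order.strict_trans)

lemma precedes_trans: "distinct x \<Longrightarrow> precedes x a b \<Longrightarrow> precedes x b c \<Longrightarrow> precedes x a c"
  unfolding precedes_def by (metis nth_eq_iff_index_eq order.strict_trans)

lemma precedes_total: "a \<in> set x \<Longrightarrow> b \<in> set x \<Longrightarrow> a \<noteq> b \<Longrightarrow> precedes x a b \<or> precedes x b a"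
  unfolding precedes_def by (metis in_set_conv_nth linorder_neqE_nat)

lemma card_predecessors_less:
  assumes "finite S" "a \<in> S" "b \<in> S" "P a b" "\<not> P a a" "\<And>c. c \<in> S \<Longrightarrow> P c a \<Longrightarrow> P c b"
  shows "card {c \<in> S. P c a} < card {c \<in> S. P c b}"
proof (rule psubset_card_mono)
  show "{c \<in> S. P c a} \<subset> {c \<in> S. P c b}"
    using assms(2-6) by blast
qed (use assms(1) in simp)

lemma sorted_wrt_card_predecessors:
  assumes "distinct x"
  shows "sorted_wrt (<) (map (\<lambda>a. card {c \<in> set x. precedes x c a}) x)"
proof -
  have "card {c \<in> set x. precedes x c (x ! i)} < card {c \<in> set x. precedes x c (x ! j)}"
    if "i < j" "j < length x" for i j
    using that precedes_nth[OF that] precedes_irrefl[OF assms] precedes_trans[OF assms]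
    by (intro card_predecessors_less) auto
  then show ?thesis
    by (simp add: sorted_wrt_iff_nth_less)
qed

lemma list_eq_if_precedes_eq:
  assumes "distinct x" "distinct y" "set x = set y" "\<And>a b. precedes x a b \<longleftrightarrow> precedes y a b"
  shows "x = y"
proof -
  define r where "r a = card {c \<in> set x. precedes x c a}" for a
  have r_y: "r = (\<lambda>a. card {c \<in> set y. precedes y c a})"
    unfolding r_def using assms(3,4) by simp
  have x: "sorted_wrt (<) (map r x)"
    unfolding r_def by (rule sorted_wrt_card_predecessors[OF assms(1)])
  have y: "sorted_wrt (<) (map r y)"
    unfolding r_y by (rule sorted_wrt_card_predecessors[OF assms(2)])
  have "inj_on r (set x \<union> set y)"
    using x assms(3) by (simp add: strict_sorted_iff distinct_map)
  with x y assms(3) show ?thesis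
    by (intro map_sorted_distinct_set_unique) (auto simp: strict_sorted_iff)
qed

lemma sorted_map_precedes_le:
  assumes "sorted (map f x)" "precedes x a b"
  shows "f a \<le> f b"
proof -
  obtain i j where "i < j" "j < length x" "x ! i = a" "x ! j = b"
    using assms(2) unfolding precedes_def by blast
  then show ?thesis
    using sorted_nth_mono[OF assms(1), of i j] by simp
qed

lemma exists_list_realizing_order:
  assumes "finite S" and irrefl: "\<And>a. \<not> P a a"
    and trans: "\<And>a b c. a \<in> S \<Longrightarrow> b \<in> S \<Longrightarrow> c \<in> S \<Longrightarrow> P a b \<Longrightarrow> P b c \<Longrightarrow> P a c"
    and total: "\<And>a b. a \<in> S \<Longrightarrow> b \<in> S \<Longrightarrow> a \<noteq> b \<Longrightarrow> P a b \<or> P b a"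
  obtains z where "distinct z" "set z = S" "\<And>a b. a \<in> S \<Longrightarrow> b \<in> S \<Longrightarrow> precedes z a b \<longleftrightarrow> P a b"
proof -
  define r where "r a = card {c \<in> S. P c a}" for a
  define z where "z = sort_key r (sorted_list_of_set S)"
  have r_less: "r a < r b" if "a \<in> S" "b \<in> S" "P a b" for a b
    unfolding r_def
  proof (rule card_predecessors_less[where P = P, OF assms(1) that irrefl])
    show "P c b" if "c \<in> S" "P c a" for c
      using trans[OF that(1) \<open>a \<in> S\<close> \<open>b \<in> S\<close> that(2) \<open>P a b\<close>] .
  qed
  have z: "distinct z" "set z = S"
    unfolding z_def using assms(1) by simp_all
  have sorted: "sorted (map r z)"
    unfolding z_def by (rule sorted_sort_key)
  have not_P: "\<not> P b a" if ab: "precedes z a b" for a b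
    using sorted_map_precedes_le[OF sorted ab] r_less[of b a] precedes_set[OF ab] z(2) by fastforce
  have "precedes z a b \<longleftrightarrow> P a b" if ab: "a \<in> S" "b \<in> S" for a b
  proof
    assume "precedes z a b"
    then show "P a b"
      using not_P total[OF ab] precedes_irrefl[OF z(1)] by blast
  next
    assume "P a b"
    then show "precedes z a b"
      using not_P[of b a] precedes_total[of a z b] irrefl[of a] ab z(2) by blast
  qed
  with z show thesis
    using that by blast
qed

lemma perms_distinct: "x \<in> perms n \<Longrightarrow> distinct x"
  unfolding perms_def by simp

lemma set_perms: "x \<in> perms n \<Longrightarrow> set x = {1..n}"
  unfolding perms_def by simp

lemma length_perms: "x \<in> perms n \<Longrightarrow> length x = n"
  using distinct_card[OF perms_distinct] set_perms by fastforce

lemma finite_perms: "finite (perms n)"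
proof (rule finite_subset)
  show "perms n \<subseteq> {xs. set xs \<subseteq> {1..n} \<and> length xs = n}"
    using set_perms length_perms by blast
qed (rule finite_lists_length_eq[OF finite_atLeastAtMost])

definition noninv_set :: "nat list \<Rightarrow> (nat \<times> nat) set" where
  "noninv_set x = {(a, b). a < b \<and> precedes x a b}"

definition ordered_pairs :: "nat \<Rightarrow> (nat \<times> nat) set" where
  "ordered_pairs n = {(a, b). 1 \<le> a \<and> a < b \<and> b \<le> n}"

lemma precedes_perms_iff:
  assumes "x \<in> perms n" "a \<in> {1..n}" "b \<in> {1..n}"
  shows "precedes x a b \<longleftrightarrow> a < b \<and> (a, b) \<in> noninv_set x \<or> b < a \<and> (b, a) \<notin> noninv_set x"
  using assms precedes_total[of a x b] precedes_asym[OF perms_distinct[OF assms(1)], of a b]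
    precedes_irrefl[OF perms_distinct[OF assms(1)], of a]
  unfolding noninv_set_def set_perms[OF assms(1)] by (cases a b rule: linorder_cases) auto

lemma noninv_set_subset: "x \<in> perms n \<Longrightarrow> noninv_set x \<subseteq> ordered_pairs n"
  unfolding noninv_set_def ordered_pairs_def using precedes_set set_perms by fastforce

lemma inv_set_precedes: "inv_set x = {(a, b). a < b \<and> precedes x b a}"
  unfolding inv_set_def precedes_def by auto

lemma finite_inv_set: "finite (inv_set x)"
proof (rule finite_subset)
  show "inv_set x \<subseteq> set x \<times> set x"
    unfolding inv_set_precedes using precedes_set by blast
qed simp

lemma inv_set_perms:
  assumes "x \<in> perms n"
  shows "inv_set x = ordered_pairs n - noninv_set x"
proof (rule set_eqI)
  fix p :: "nat \<times> nat"
  obtain a b where p: "p = (a, b)"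
    by fastforce
  show "p \<in> inv_set x \<longleftrightarrow> p \<in> ordered_pairs n - noninv_set x"
    unfolding p inv_set_precedes ordered_pairs_def noninv_set_def
    using precedes_set[of x b a] precedes_total[of a x b] set_perms[OF assms]
      precedes_asym[OF perms_distinct[OF assms], of b a] by auto
qed

lemma weak_le_perms_iff:
  assumes "x \<in> perms n" "y \<in> perms n"
  shows "weak_le x y \<longleftrightarrow> noninv_set y \<subseteq> noninv_set x"
  unfolding weak_le_def inv_set_perms[OF assms(1)] inv_set_perms[OF assms(2)]
  using noninv_set_subset[OF assms(1)] noninv_set_subset[OF assms(2)] by blast

lemma perms_eq_if_noninv_set_eq:
  assumes x: "x \<in> perms n" and y: "y \<in> perms n" and eq: "noninv_set x = noninv_set y"
  shows "x = y"
proof (rule list_eq_if_precedes_eq)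
  show "distinct x" "distinct y" "set x = set y"
    using x y by (simp_all add: perms_distinct set_perms)
  show "precedes x a b \<longleftrightarrow> precedes y a b" for a b
  proof (cases "a \<in> {1..n} \<and> b \<in> {1..n}")
    case True
    then show ?thesis
      using precedes_perms_iff[OF x] precedes_perms_iff[OF y] eq by simp
  next
    case False
    then show ?thesis
      using precedes_set set_perms[OF x] set_perms[OF y] by blast
  qed
qed

lemma weak_le_antisym:
  "x \<in> perms n \<Longrightarrow> y \<in> perms n \<Longrightarrow> weak_le x y \<Longrightarrow> weak_le y x \<Longrightarrow> x = y"
  by (simp add: weak_le_perms_iff perms_eq_if_noninv_set_eq)

lemma trans_noninv_set: "distinct x \<Longrightarrow> trans (noninv_set x)"
  unfolding trans_def noninv_set_def using precedes_trans by fastforce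

text \<open>Together with transitivity, this characterizes the non-inversion sets of permutations
  of \<open>[n]\<close> among the subsets of \<open>ordered_pairs n\<close>.\<close>
definition split_closed :: "nat set \<Rightarrow> (nat \<times> nat) set \<Rightarrow> bool" where
  "split_closed S T \<longleftrightarrow> (\<forall>a b c. (a, c) \<in> T \<longrightarrow> b \<in> S \<longrightarrow> a < b \<longrightarrow> b < c \<longrightarrow> (a, b) \<in> T \<or> (b, c) \<in> T)"

lemma split_closedD:
  "split_closed S T \<Longrightarrow> (a, c) \<in> T \<Longrightarrow> b \<in> S \<Longrightarrow> a < b \<Longrightarrow> b < c \<Longrightarrow> (a, b) \<in> T \<or> (b, c) \<in> T"
  unfolding split_closed_def by blast

lemma split_closed_noninv_set:
  assumes "distinct x"
  shows "split_closed (set x) (noninv_set x)"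
  unfolding split_closed_def
proof (intro allI impI)
  fix a b c assume ac: "(a, c) \<in> noninv_set x" and b: "b \<in> set x" "a < b" "b < c"
  then have "precedes x a b \<or> precedes x b a"
    using precedes_total[of a x b] precedes_set unfolding noninv_set_def by blast
  then show "(a, b) \<in> noninv_set x \<or> (b, c) \<in> noninv_set x"
    using ac b precedes_trans[OF assms, of b a c] unfolding noninv_set_def by blast
qed

lemma split_closed_Un: "split_closed S R \<Longrightarrow> split_closed S T \<Longrightarrow> split_closed S (R \<union> T)"
  unfolding split_closed_def by blast

lemma split_closed_trancl:
  assumes split: "split_closed S R" and incr: "R \<subseteq> {(a, b). a < b}"
  shows "split_closed S (R\<^sup>+)"
  unfolding split_closed_def
proof (intro allI impI)
  fix a b c assume "(a, c) \<in> R\<^sup>+" "b \<in> S" "a < b" "b < c"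
  then show "(a, b) \<in> R\<^sup>+ \<or> (b, c) \<in> R\<^sup>+"
  proof (induction arbitrary: b rule: trancl_induct)
    case (base c)
    then show ?case
      using split_closedD[OF split] by blast
  next
    case (step d c)
    have "d < c"
      using step.hyps(2) incr by blast
    consider "b < d" | "b = d" | "d < b"
      by linarith
    then show ?case
    proof cases
      case 1
      then show ?thesis
        using step by (meson trancl_into_trancl)
    next
      case 2
      then show ?thesis
        using step.hyps by blast
    next
      case 3
      then have "(d, b) \<in> R \<or> (b, c) \<in> R"
        using split_closedD[OF split step.hyps(2) step.prems(1)] step.prems(3) by blast
      then show ?thesis
        using step.hyps(1) by (meson r_into_trancl trancl_into_trancl)
    qed
  qed
qed

lemma trancl_subset_iff_of_trans:
  assumes "trans S"
  shows "R\<^sup>+ \<subseteq> S \<longleftrightarrow> R \<subseteq> S"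
proof
  show "R\<^sup>+ \<subseteq> S \<Longrightarrow> R \<subseteq> S"
    by (meson r_into_trancl' subrelI subsetD)
  show "R \<subseteq> S \<Longrightarrow> R\<^sup>+ \<subseteq> S"
    using trancl_mono_subset trancl_id[OF assms] by metis
qed

lemma exists_perm_with_noninv_set:
  assumes sub: "T \<subseteq> ordered_pairs n" and trans: "trans T" and split: "split_closed {1..n} T"
  obtains z where "z \<in> perms n" "noninv_set z = T"
proof -
  define P where "P a b \<longleftrightarrow> a < b \<and> (a, b) \<in> T \<or> b < a \<and> (b, a) \<notin> T" for a b
  have P_trans: "P a c" if "a \<in> {1..n}" "b \<in> {1..n}" "c \<in> {1..n}" "P a b" "P b c" for a b c
    using that transD[OF trans, of a b c] transD[OF trans, of c a b] transD[OF trans, of b c a]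
      split_closedD[OF split, of a b c] split_closedD[OF split, of b c a]
      split_closedD[OF split, of c a b]
    unfolding P_def by (cases "a = c") auto
  have P_irrefl: "\<not> P a a" for a
    unfolding P_def by simp
  have P_total: "P a b \<or> P b a" if "a \<noteq> b" for a b
    using that unfolding P_def by auto
  obtain z where z: "distinct z" "set z = {1..n}"
    and prec: "\<And>a b. a \<in> {1..n} \<Longrightarrow> b \<in> {1..n} \<Longrightarrow> precedes z a b \<longleftrightarrow> P a b"
    using exists_list_realizing_order[where S = "{1..n}" and P = P, OF finite_atLeastAtMost P_irrefl]
      P_trans P_total by blast
  have "z \<in> perms n"
    using z unfolding perms_def by simp
  moreover have "noninv_set z = T"
  proof -
    have "noninv_set z = {(a, b). a < b \<and> a \<in> {1..n} \<and> b \<in> {1..n} \<and> P a b}"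
      unfolding noninv_set_def using prec precedes_set z(2) by blast
    also have "\<dots> = T"
      using sub unfolding P_def ordered_pairs_def by auto
    finally show ?thesis .
  qed
  ultimately show thesis
    using that by blast
qed

lemma exists_weak_meet:
  assumes x: "x \<in> perms n" and y: "y \<in> perms n"
  obtains z where "z \<in> perms n" "\<And>w. w \<in> perms n \<Longrightarrow> weak_le w z \<longleftrightarrow> weak_le w x \<and> weak_le w y"
proof -
  let ?T = "(noninv_set x \<union> noninv_set y)\<^sup>+"
  have "trans (ordered_pairs n)"
    unfolding trans_def ordered_pairs_def by auto
  then have "?T \<subseteq> ordered_pairs n"
    unfolding trancl_subset_iff_of_trans[OF \<open>trans (ordered_pairs n)\<close>]
    using noninv_set_subset[OF x] noninv_set_subset[OF y] by simp
  moreover have "split_closed {1..n} ?T"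
    using split_closed_noninv_set[OF perms_distinct[OF x]] split_closed_noninv_set[OF perms_distinct[OF y]]
    unfolding set_perms[OF x] set_perms[OF y]
    by (intro split_closed_trancl split_closed_Un) (auto simp: noninv_set_def)
  ultimately obtain z where z: "z \<in> perms n" "noninv_set z = ?T"
    using exists_perm_with_noninv_set trans_trancl by blast
  have "weak_le w z \<longleftrightarrow> weak_le w x \<and> weak_le w y" if w: "w \<in> perms n" for w
    unfolding weak_le_perms_iff[OF w z(1)] weak_le_perms_iff[OF w x] weak_le_perms_iff[OF w y] z(2)
    unfolding trancl_subset_iff_of_trans[OF trans_noninv_set[OF perms_distinct[OF w]]] by simp
  with z(1) show thesis
    using that by blast
qed

lemma
  assumes x: "x \<in> perms n" and y: "y \<in> perms n"
  shows weak_meet_perms: "weak_meet n x y \<in> perms n"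
    and weak_meet_le1: "weak_le (weak_meet n x y) x"
    and weak_meet_le2: "weak_le (weak_meet n x y) y"
    and weak_meet_greatest: "\<And>w. w \<in> perms n \<Longrightarrow> weak_le w x \<Longrightarrow> weak_le w y \<Longrightarrow> weak_le w (weak_meet n x y)"
proof -
  define Q where "Q z \<longleftrightarrow> z \<in> perms n \<and> weak_le z x \<and> weak_le z y \<and>
      (\<forall>w\<in>perms n. weak_le w x \<and> weak_le w y \<longrightarrow> weak_le w z)" for z
  obtain z where z: "z \<in> perms n" "\<And>w. w \<in> perms n \<Longrightarrow> weak_le w z \<longleftrightarrow> weak_le w x \<and> weak_le w y"
    using exists_weak_meet[OF x y] by blast
  have "weak_le z z"
    unfolding weak_le_def by simp
  then have "Q z"
    unfolding Q_def using z by blast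
  moreover have "z' = z" if "Q z'" for z'
    using that \<open>Q z\<close> weak_le_antisym unfolding Q_def by blast
  ultimately have "Q (weak_meet n x y)"
    unfolding weak_meet_def Q_def[symmetric] by (rule theI)
  then show "weak_meet n x y \<in> perms n" "weak_le (weak_meet n x y) x" "weak_le (weak_meet n x y) y"
    "\<And>w. w \<in> perms n \<Longrightarrow> weak_le w x \<Longrightarrow> weak_le w y \<Longrightarrow> weak_le w (weak_meet n x y)"
    unfolding Q_def by blast+
qed

lemma weak_meet_idem: "x \<in> perms n \<Longrightarrow> weak_meet n x x = x"
  by (meson weak_le_antisym weak_meet_perms weak_meet_le1 weak_meet_greatest order_refl weak_le_def)

section \<open>Minima of congruence classes\<close>

definition cong_class :: "(nat \<Rightarrow> (nat list \<times> nat list) set) \<Rightarrow> nat list \<Rightarrow> nat list set" where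
  "cong_class \<Theta> x = {y \<in> perms (length x). (x, y) \<in> \<Theta> (length x)}"

lemma finite_cong_class: "finite (cong_class \<Theta> x)"
  unfolding cong_class_def using finite_perms by simp

locale lattice_congruences =
  fixes \<Theta> :: "nat \<Rightarrow> (nat list \<times> nat list) set"
  assumes lattice_congruence: "\<And>n. lattice_congruence n (\<Theta> n)"
begin

lemma equiv_perms: "equiv (perms n) (\<Theta> n)"
  using lattice_congruence unfolding lattice_congruence_def by blast

lemma cong_perms: "(x, y) \<in> \<Theta> n \<Longrightarrow> x \<in> perms n \<and> y \<in> perms n"
  using equiv_perms equiv_class_eq_iff by fast

lemma cong_refl: "x \<in> perms n \<Longrightarrow> (x, x) \<in> \<Theta> n"
  using equiv_perms[of n] unfolding equiv_def by (meson refl_onD)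

lemma cong_sym: "(x, y) \<in> \<Theta> n \<Longrightarrow> (y, x) \<in> \<Theta> n"
  using equiv_perms by (meson equiv_def symD)

lemma cong_trans: "(x, y) \<in> \<Theta> n \<Longrightarrow> (y, z) \<in> \<Theta> n \<Longrightarrow> (x, z) \<in> \<Theta> n"
  using equiv_perms by (meson equiv_def transD)

lemma cong_weak_meet:
  "(x, x') \<in> \<Theta> n \<Longrightarrow> (y, y') \<in> \<Theta> n \<Longrightarrow> (weak_meet n x y, weak_meet n x' y') \<in> \<Theta> n"
  using lattice_congruence unfolding lattice_congruence_def by blast

text \<open>A class is finite and closed under meets, so an element with fewest inversions is its minimum.\<close>
lemma cong_class_has_least:
  assumes x: "x \<in> perms n"
  obtains m where "(x, m) \<in> \<Theta> n" "\<And>w. (x, w) \<in> \<Theta> n \<Longrightarrow> weak_le m w"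
proof -
  obtain m where m: "(x, m) \<in> \<Theta> n"
    and fewest: "\<And>m'. (x, m') \<in> \<Theta> n \<Longrightarrow> card (inv_set m) \<le> card (inv_set m')"
    using ex_has_least_nat[of "\<lambda>m. (x, m) \<in> \<Theta> n" x "\<lambda>m. card (inv_set m)"] cong_refl[OF x] by blast
  have "weak_le m w" if w: "(x, w) \<in> \<Theta> n" for w
  proof -
    have mw: "(m, w) \<in> \<Theta> n"
      using cong_trans[OF cong_sym[OF m] w] .
    have mp: "m \<in> perms n" and wp: "w \<in> perms n"
      using cong_perms[OF mw] by auto
    have "(weak_meet n m m, weak_meet n m w) \<in> \<Theta> n"
      using cong_weak_meet[OF cong_refl[OF mp] mw] .
    then have "(x, weak_meet n m w) \<in> \<Theta> n"
      using cong_trans[OF m] weak_meet_idem[OF mp] by simp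
    then have "card (inv_set m) \<le> card (inv_set (weak_meet n m w))"
      by (rule fewest)
    moreover have "inv_set (weak_meet n m w) \<subseteq> inv_set m"
      using weak_meet_le1[OF mp wp] unfolding weak_le_def .
    ultimately have "inv_set (weak_meet n m w) = inv_set m"
      using finite_inv_set by (metis card_seteq)
    then show ?thesis
      using weak_meet_le2[OF mp wp] unfolding weak_le_def by simp
  qed
  then show thesis
    using that m by blast
qed

lemma
  assumes x: "x \<in> perms n"
  shows cong_pi_down: "(x, pi_down \<Theta> x) \<in> \<Theta> n"
    and pi_down_least: "\<And>w. (x, w) \<in> \<Theta> n \<Longrightarrow> weak_le (pi_down \<Theta> x) w"
proof -
  define Q where "Q z \<longleftrightarrow> (x, z) \<in> \<Theta> n \<and> (\<forall>w. (x, w) \<in> \<Theta> n \<longrightarrow> weak_le z w)" for z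
  obtain m where "Q m"
    using cong_class_has_least[OF x] unfolding Q_def by metis
  moreover have "z = m" if "Q z" for z
    using that \<open>Q m\<close> weak_le_antisym cong_perms unfolding Q_def by meson
  ultimately have "Q (pi_down \<Theta> x)"
    unfolding pi_down_def length_perms[OF x] Q_def[symmetric] by (rule theI)
  then show "(x, pi_down \<Theta> x) \<in> \<Theta> n" "\<And>w. (x, w) \<in> \<Theta> n \<Longrightarrow> weak_le (pi_down \<Theta> x) w"
    unfolding Q_def by blast+
qed

lemma pi_down_perms: "x \<in> perms n \<Longrightarrow> pi_down \<Theta> x \<in> perms n"
  using cong_pi_down cong_perms by blast

lemma pi_down_eq_if_cong:
  assumes xy: "(x, y) \<in> \<Theta> n"
  shows "pi_down \<Theta> x = pi_down \<Theta> y"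
proof (rule weak_le_antisym)
  have x: "x \<in> perms n" and y: "y \<in> perms n"
    using cong_perms[OF xy] by auto
  show "pi_down \<Theta> x \<in> perms n" "pi_down \<Theta> y \<in> perms n"
    using pi_down_perms x y by auto
  show "weak_le (pi_down \<Theta> x) (pi_down \<Theta> y)"
    using pi_down_least[OF x] cong_trans[OF xy cong_pi_down[OF y]] by blast
  show "weak_le (pi_down \<Theta> y) (pi_down \<Theta> x)"
    using pi_down_least[OF y] cong_trans[OF cong_sym[OF xy] cong_pi_down[OF x]] by blast
qed

lemma pi_down_idem: "x \<in> perms n \<Longrightarrow> pi_down \<Theta> (pi_down \<Theta> x) = pi_down \<Theta> x"
  using pi_down_eq_if_cong[OF cong_pi_down] by metis

lemma mem_cong_class_iff:
  assumes u: "pi_down \<Theta> u = u"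
  shows "y \<in> cong_class \<Theta> u \<longleftrightarrow> y \<in> perms (length y) \<and> pi_down \<Theta> y = u"
proof
  assume "y \<in> cong_class \<Theta> u"
  then have y: "y \<in> perms (length u)" and uy: "(u, y) \<in> \<Theta> (length u)"
    unfolding cong_class_def by auto
  then show "y \<in> perms (length y) \<and> pi_down \<Theta> y = u"
    using pi_down_eq_if_cong[OF uy] u length_perms[OF y] by simp
next
  assume y: "y \<in> perms (length y) \<and> pi_down \<Theta> y = u"
  then have "(u, y) \<in> \<Theta> (length y)"
    using cong_sym[OF cong_pi_down] by blast
  moreover have "length u = length y"
    using y pi_down_perms length_perms by blast
  ultimately show "y \<in> cong_class \<Theta> u"
    unfolding cong_class_def using y by simp
qed

end

section \<open>Standardization and the insertion maps\<close>

definition rank :: "nat set \<Rightarrow> nat \<Rightarrow> nat" where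
  "rank S a = card {b \<in> S. b \<le> a}"

lemma st_eq_map_rank: "st xs = map (rank (set xs)) xs"
  unfolding st_def rank_def by simp

lemma length_st [simp]: "length (st xs) = length xs"
  unfolding st_def by simp

lemma rank_strict_mono_on:
  assumes "finite S"
  shows "strict_mono_on S (rank S)"
proof (rule strict_mono_onI)
  fix a b assume "a \<in> S" "b \<in> S" "a < b"
  then have "{c \<in> S. c \<le> a} \<subseteq> {c \<in> S. c \<le> b}" "b \<in> {c \<in> S. c \<le> b} - {c \<in> S. c \<le> a}"
    by auto
  then have "{c \<in> S. c \<le> a} \<subset> {c \<in> S. c \<le> b}"
    by blast
  then show "rank S a < rank S b"
    unfolding rank_def using assms by (intro psubset_card_mono) auto
qed

lemma rank_image:
  assumes "finite S"
  shows "rank S ` S = {1..card S}"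
proof (rule card_subset_eq)
  show "rank S ` S \<subseteq> {1..card S}"
  proof
    fix r assume "r \<in> rank S ` S"
    then obtain a where "a \<in> S" "r = rank S a"
      by blast
    moreover have "{b \<in> S. b \<le> a} \<subseteq> S"
      by blast
    ultimately show "r \<in> {1..card S}"
      unfolding rank_def using assms card_mono[OF assms]
      by (auto simp: Suc_le_eq card_gt_0_iff intro!: exI[of _ a])
  qed
  show "card (rank S ` S) = card {1..card S}"
    using card_image[OF strict_mono_on_imp_inj_on[OF rank_strict_mono_on[OF assms]]] by simp
qed simp

lemma st_perms: "distinct xs \<Longrightarrow> st xs \<in> perms (length xs)"
  unfolding perms_def st_eq_map_rank
  using strict_mono_on_imp_inj_on[OF rank_strict_mono_on] rank_image
  by (simp add: distinct_map distinct_card)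

lemma st_inj:
  assumes "distinct xs" "distinct ys" "set xs = set ys" "st xs = st ys"
  shows "xs = ys"
proof -
  have "inj_on (rank (set xs)) (set xs \<union> set ys)"
    using strict_mono_on_imp_inj_on[OF rank_strict_mono_on] assms(3) by simp
  moreover have "map (rank (set xs)) xs = map (rank (set xs)) ys"
    using assms(3,4) unfolding st_eq_map_rank by simp
  ultimately show ?thesis
    by (rule inj_on_map_eq_map[THEN iffD1])
qed

lemma st_map_strict_mono:
  assumes mono: "strict_mono_on (set xs) g"
  shows "st (map g xs) = st xs"
proof -
  have "rank (g ` set xs) (g a) = rank (set xs) a" if a: "a \<in> set xs" for a
  proof -
    have "{c \<in> g ` set xs. c \<le> g a} = g ` {b \<in> set xs. b \<le> a}"
      using a mono by (auto simp: strict_mono_on_leD strict_mono_on_less_eq[OF mono])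
    moreover have "inj_on g {b \<in> set xs. b \<le> a}"
      using strict_mono_on_imp_inj_on[OF mono] by (rule inj_on_subset) auto
    ultimately show ?thesis
      unfolding rank_def by (simp add: card_image)
  qed
  then show ?thesis
    unfolding st_eq_map_rank by simp
qed

lemma st_perms_id:
  assumes "a \<in> perms p"
  shows "st a = a"
proof -
  have "rank {1..p} i = i" if "i \<in> {1..p}" for i
  proof -
    have "{b \<in> {1..p}. b \<le> i} = {1..i}"
      using that by auto
    then show ?thesis
      unfolding rank_def by simp
  qed
  then show ?thesis
    unfolding st_eq_map_rank using set_perms[OF assms] by (intro map_idI) auto
qed

lemma exists_strict_mono_enumeration:
  fixes Q :: "nat set"
  assumes "finite Q"
  obtains g where "strict_mono_on {1..card Q} g" "g ` {1..card Q} = Q"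
proof
  have bij: "bij_betw (rank Q) Q {1..card Q}"
    unfolding bij_betw_def using strict_mono_on_imp_inj_on[OF rank_strict_mono_on] rank_image assms by blast
  define g where "g = inv_into Q (rank Q)"
  show "g ` {1..card Q} = Q"
    unfolding g_def using bij_betw_inv_into[OF bij] by (simp add: bij_betw_def)
  show "strict_mono_on {1..card Q} g"
  proof (rule strict_mono_onI)
    fix i j assume ij: "i \<in> {1..card Q}" "j \<in> {1..card Q}" "i < j"
    have g: "g i \<in> Q" "g j \<in> Q" "rank Q (g i) = i" "rank Q (g j) = j"
      using ij bij unfolding g_def by (auto simp: bij_betw_def f_inv_into_f inv_into_into)
    show "g i < g j"
    proof (rule ccontr)
      assume "\<not> g i < g j"
      then have "rank Q (g j) \<le> rank Q (g i)"
        using strict_mono_on_leD[OF rank_strict_mono_on[OF assms]] g(1,2) by simp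
      then show False
        using g(3,4) ij(3) by simp
    qed
  qed
qed

lemma exists_perm_with_split:
  assumes Q: "Q \<subseteq> {1..p + q}" "card Q = p" and a: "a \<in> perms p" and b: "b \<in> perms q"
  obtains x where "x \<in> perms (p + q)" "set (take p x) = Q" "st (take p x) = a" "st (drop p x) = b"
proof -
  let ?R = "{1..p + q} - Q"
  have fin: "finite Q" "finite ?R"
    using Q(1) finite_subset by auto
  have "card ?R = q"
    using Q card_Diff_subset[OF fin(1) Q(1)] by simp
  then obtain h where h: "strict_mono_on {1..q} h" "h ` {1..q} = ?R"
    using exists_strict_mono_enumeration[OF fin(2)] by metis
  obtain g where g: "strict_mono_on {1..p} g" "g ` {1..p} = Q"
    using exists_strict_mono_enumeration[OF fin(1)] Q(2) by metis
  define x where "x = map g a @ map h b"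
  have take: "take p x = map g a" and drop: "drop p x = map h b"
    unfolding x_def using length_perms[OF a] by simp_all
  have "distinct x"
    unfolding x_def using g h perms_distinct[OF a] perms_distinct[OF b] set_perms[OF a] set_perms[OF b]
    by (auto simp: distinct_map dest: strict_mono_on_imp_inj_on)
  moreover have "set x = {1..p + q}"
    unfolding x_def using g(2) h(2) Q(1) set_perms[OF a] set_perms[OF b] by auto
  ultimately have "x \<in> perms (p + q)"
    unfolding perms_def by simp
  moreover have "set (take p x) = Q"
    unfolding take using g(2) set_perms[OF a] by simp
  moreover have "st (take p x) = a" "st (drop p x) = b"
    unfolding take drop using st_map_strict_mono st_perms_id a b g(1) h(1)
    by (simp_all add: set_perms)
  ultimately show thesis
    using that by blast
qed

lemma perms_eq_if_split_eq:
  assumes x: "x \<in> perms n" and y: "y \<in> perms n" and take: "set (take p x) = set (take p y)"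
    and st_take: "st (take p x) = st (take p y)" and st_drop: "st (drop p x) = st (drop p y)"
  shows "x = y"
proof -
  have "take p x = take p y"
    using st_inj take st_take perms_distinct[OF x] perms_distinct[OF y] by simp
  moreover have "set (drop p z) = {1..n} - set (take p z)" if "z \<in> perms n" for z
  proof -
    have "set (take p z) \<union> set (drop p z) = {1..n}"
      using set_perms[OF that] by (metis set_append append_take_drop_id)
    moreover have "set (take p z) \<inter> set (drop p z) = {}"
      using set_take_disj_set_drop_if_distinct[OF perms_distinct[OF that]] by simp
    ultimately show ?thesis
      by blast
  qed
  then have "drop p x = drop p y"
    using st_inj st_drop take perms_distinct[OF x] perms_distinct[OF y] x y by simp
  ultimately show ?thesis
    by (metis append_take_drop_id)
qed

lemma
  assumes "Q \<subseteq> {1..p + q}" "card Q = p" "a \<in> perms p" "b \<in> perms q"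
  shows phi_perms: "phi Q p q a b \<in> perms (p + q)"
    and set_take_phi: "set (take p (phi Q p q a b)) = Q"
    and st_take_phi: "st (take p (phi Q p q a b)) = a"
    and st_drop_phi: "st (drop p (phi Q p q a b)) = b"
proof -
  define P where "P x \<longleftrightarrow> x \<in> perms (p + q) \<and> set (take p x) = Q \<and> st (take p x) = a \<and> st (drop p x) = b"
    for x
  obtain x where "P x"
    using exists_perm_with_split[OF assms] unfolding P_def by blast
  moreover have "y = x" if "P y" for y
    using that \<open>P x\<close> perms_eq_if_split_eq[of y "p + q" x p] unfolding P_def by simp
  ultimately have "P (phi Q p q a b)"
    unfolding phi_def P_def[symmetric] by (rule theI)
  then show "phi Q p q a b \<in> perms (p + q)" "set (take p (phi Q p q a b)) = Q"
    "st (take p (phi Q p q a b)) = a" "st (drop p (phi Q p q a b)) = b"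
    unfolding P_def by blast+
qed

lemma phi_split:
  assumes "y \<in> perms (p + q)"
  shows "phi (set (take p y)) p q (st (take p y)) (st (drop p y)) = y"
  unfolding phi_def
proof (rule the_equality)
  show "y \<in> perms (p + q) \<and> set (take p y) = set (take p y) \<and>
      st (take p y) = st (take p y) \<and> st (drop p y) = st (drop p y)"
    using assms by simp
  show "x = y" if "x \<in> perms (p + q) \<and> set (take p x) = set (take p y) \<and>
      st (take p x) = st (take p y) \<and> st (drop p x) = st (drop p y)" for x
    using that perms_eq_if_split_eq[OF _ assms, of x p] by blast
qed

section \<open>Splittings of the members of a class\<close>

definition splits_as :: "nat list \<Rightarrow> nat list \<Rightarrow> nat list \<Rightarrow> bool" where
  "splits_as y a b \<longleftrightarrow> length a \<le> length y \<and> st (take (length a) y) = a \<and> st (drop (length a) y) = b"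

definition split_count :: "(nat \<Rightarrow> (nat list \<times> nat list) set) \<Rightarrow> nat list \<Rightarrow> nat list \<Rightarrow> nat list \<Rightarrow> nat" where
  "split_count \<Theta> x a b = card {y \<in> cong_class \<Theta> x. splits_as y a b}"

lemma split_count_nonzeroD:
  assumes "split_count \<Theta> x a b \<noteq> 0"
  shows "a \<in> perms (length a)" "b \<in> perms (length b)" "length a + length b = length x"
proof -
  have "{y \<in> cong_class \<Theta> x. splits_as y a b} \<noteq> {}"
    using assms unfolding split_count_def by force
  then obtain y where y: "y \<in> perms (length x)" "splits_as y a b"
    unfolding cong_class_def by blast
  then have d: "distinct y" and len: "length y = length x"
    using perms_distinct length_perms by auto
  have a: "a = st (take (length a) y)" and b: "b = st (drop (length a) y)" and le: "length a \<le> length y"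
    using y(2) unfolding splits_as_def by simp_all
  show "a \<in> perms (length a)"
    using st_perms[OF distinct_take[OF d], of "length a"] le by (simp flip: a)
  have len_b: "length b = length y - length a"
    using arg_cong[OF b, of length] by simp
  show "b \<in> perms (length b)"
    using st_perms[OF distinct_drop[OF d], of "length a"] len_b by (simp flip: b)
  show "length a + length b = length x"
    using le len len_b by simp
qed

lemma inj_on_phi:
  assumes "a \<in> perms p" "b \<in> perms q"
  shows "inj_on (\<lambda>Q. phi Q p q a b) {Q. Q \<subseteq> {1..p + q} \<and> card Q = p}"
proof (rule inj_onI)
  fix Q Q' assume Q: "Q \<in> {Q. Q \<subseteq> {1..p + q} \<and> card Q = p}" and Q': "Q' \<in> {Q. Q \<subseteq> {1..p + q} \<and> card Q = p}"
    and eq: "phi Q p q a b = phi Q' p q a b"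
  have "Q = set (take p (phi Q p q a b))"
    using Q set_take_phi[OF _ _ assms] by force
  also have "\<dots> = Q'"
    unfolding eq using Q' set_take_phi[OF _ _ assms] by force
  finally show "Q = Q'" .
qed

lemma splitting_class_members_eq_phi_image:
  assumes a: "a \<in> perms p" and b: "b \<in> perms q" and x: "length x = p + q"
  shows "{y \<in> cong_class \<Theta> x. splits_as y a b} =
    (\<lambda>Q. phi Q p q a b) ` {Q. Q \<subseteq> {1..p + q} \<and> card Q = p \<and> (x, phi Q p q a b) \<in> \<Theta> (p + q)}"
    (is "_ = _ ` ?Qs")
proof (intro set_eqI iffI)
  fix y assume "y \<in> {y \<in> cong_class \<Theta> x. splits_as y a b}"
  then have y: "y \<in> perms (p + q)" "(x, y) \<in> \<Theta> (p + q)" "st (take p y) = a" "st (drop p y) = b"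
    unfolding cong_class_def splits_as_def x length_perms[OF a] by auto
  then have y_phi: "y = phi (set (take p y)) p q a b"
    using phi_split[OF y(1)] by simp
  have "set (take p y) \<subseteq> {1..p + q}"
    using set_take_subset[of p y] set_perms[OF y(1)] by blast
  moreover have "card (set (take p y)) = p"
    using distinct_card[OF distinct_take[OF perms_distinct[OF y(1)]]] length_perms[OF y(1)] by simp
  ultimately have "set (take p y) \<in> ?Qs"
    using y(2) y_phi by simp
  then show "y \<in> (\<lambda>Q. phi Q p q a b) ` ?Qs"
    using y_phi by (rule rev_image_eqI)
next
  fix y assume "y \<in> (\<lambda>Q. phi Q p q a b) ` ?Qs"
  then obtain Q where Q: "Q \<subseteq> {1..p + q}" "card Q = p" "(x, phi Q p q a b) \<in> \<Theta> (p + q)"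
    and y: "y = phi Q p q a b"
    by blast
  then show "y \<in> {y \<in> cong_class \<Theta> x. splits_as y a b}"
    unfolding cong_class_def splits_as_def x length_perms[OF a]
    using phi_perms[OF Q(1,2) a b] st_take_phi[OF Q(1,2) a b] st_drop_phi[OF Q(1,2) a b]
      length_perms[OF phi_perms[OF Q(1,2) a b]] by simp
qed

lemma split_count_eq_card_phi:
  assumes a: "a \<in> perms p" and b: "b \<in> perms q" and x: "length x = p + q"
  shows "split_count \<Theta> x a b = card {Q. Q \<subseteq> {1..p + q} \<and> card Q = p \<and> (x, phi Q p q a b) \<in> \<Theta> (p + q)}"
proof -
  have "inj_on (\<lambda>Q. phi Q p q a b) {Q. Q \<subseteq> {1..p + q} \<and> card Q = p \<and> (x, phi Q p q a b) \<in> \<Theta> (p + q)}"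
    using inj_on_phi[OF a b] by (rule inj_on_subset) blast
  then show ?thesis
    unfolding split_count_def splitting_class_members_eq_phi_image[OF a b x] by (rule card_image)
qed

context lattice_congruences
begin

lemma split_count_cong:
  assumes ins: "insertional \<Theta>" and aa: "(a, a') \<in> \<Theta> p" and bb: "(b, b') \<in> \<Theta> q"
  shows "split_count \<Theta> x a b = split_count \<Theta> x a' b'"
proof -
  have a: "a \<in> perms p" "a' \<in> perms p" and b: "b \<in> perms q" "b' \<in> perms q"
    using cong_perms[OF aa] cong_perms[OF bb] by auto
  show ?thesis
  proof (cases "length x = p + q")
    case True
    have "(x, phi Q p q a b) \<in> \<Theta> (p + q) \<longleftrightarrow> (x, phi Q p q a' b') \<in> \<Theta> (p + q)"
      if "Q \<subseteq> {1..p + q}" "card Q = p" for Q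
    proof -
      have "(phi Q p q a b, phi Q p q a' b') \<in> \<Theta> (p + q)"
        using ins that a b aa bb unfolding insertional_def by blast
      then show ?thesis
        using cong_trans cong_sym by blast
    qed
    then have "{Q. Q \<subseteq> {1..p + q} \<and> card Q = p \<and> (x, phi Q p q a b) \<in> \<Theta> (p + q)} =
        {Q. Q \<subseteq> {1..p + q} \<and> card Q = p \<and> (x, phi Q p q a' b') \<in> \<Theta> (p + q)}"
      by blast
    then show ?thesis
      unfolding split_count_eq_card_phi[OF a(1) b(1) True] split_count_eq_card_phi[OF a(2) b(2) True]
      by (rule arg_cong)
  next
    case False
    then show ?thesis
      using split_count_nonzeroD(3)[of \<Theta> x a b] split_count_nonzeroD(3)[of \<Theta> x a' b']
        length_perms a b by metis
  qed
qed

end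

section \<open>Linear extensions on finitely supported functions\<close>

abbreviation lookup :: "('a \<Rightarrow>\<^sub>0 'b::zero) \<Rightarrow> 'a \<Rightarrow> 'b" where
  "lookup \<equiv> Poly_Mapping.lookup"

abbreviation keys :: "('a \<Rightarrow>\<^sub>0 'b::zero) \<Rightarrow> 'a set" where
  "keys \<equiv> Poly_Mapping.keys"

abbreviation single :: "'a \<Rightarrow> 'b::zero \<Rightarrow> 'a \<Rightarrow>\<^sub>0 'b" where
  "single \<equiv> Poly_Mapping.single"

lemma lookup_smult_pm: "lookup (smult_pm c f) k = c * lookup f k"
  unfolding smult_pm_def by (simp add: Poly_Mapping.map.rep_eq when_def)

lemma lookup_lin_ext: "lookup (lin_ext g f) k = (\<Sum>x\<in>keys f. lookup f x * lookup (g x) k)"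
  unfolding lin_ext_def by (simp add: lookup_sum lookup_smult_pm)

lemma lookup_lin_ext_superset:
  assumes "finite A" "keys f \<subseteq> A"
  shows "lookup (lin_ext g f) k = (\<Sum>x\<in>A. lookup f x * lookup (g x) k)"
  unfolding lookup_lin_ext by (rule sum.mono_neutral_left[OF assms]) (simp add: in_keys_iff)

lemma lin_ext_single: "lin_ext g (single x 1) = g x"
  by (rule poly_mapping_eqI) (simp add: lookup_lin_ext)

lemma lin_ext_indicator:
  fixes g :: "'a \<Rightarrow> ('b \<Rightarrow>\<^sub>0 'k::field)"
  assumes "finite A"
  shows "lin_ext g (\<Sum>x\<in>A. single x 1) = (\<Sum>x\<in>A. g x)"
proof (rule poly_mapping_eqI)
  fix k
  have "keys (\<Sum>x\<in>A. single x (1::'k)) \<subseteq> A"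
    using keys_sum[of "\<lambda>x. single x 1" A] by auto
  then show "lookup (lin_ext g (\<Sum>x\<in>A. single x 1)) k = lookup (\<Sum>x\<in>A. g x) k"
    using assms by (simp add: lookup_lin_ext_superset lookup_sum lookup_single when_def)
qed

lemma lin_ext_lin_ext: "lin_ext g (lin_ext h f) = lin_ext (\<lambda>x. lin_ext g (h x)) f"
proof (rule poly_mapping_eqI)
  fix k
  define A where "A = (\<Union>x\<in>keys f. keys (h x))"
  have A: "finite A" "\<And>x. x \<in> keys f \<Longrightarrow> keys (h x) \<subseteq> A"
    unfolding A_def by auto
  have keys: "keys (lin_ext h f) \<subseteq> A"
  proof
    fix y assume "y \<in> keys (lin_ext h f)"
    then have "(\<Sum>x\<in>keys f. lookup f x * lookup (h x) y) \<noteq> 0"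
      by (simp add: in_keys_iff lookup_lin_ext)
    then obtain x where "x \<in> keys f" "lookup f x * lookup (h x) y \<noteq> 0"
      by (meson sum.not_neutral_contains_not_neutral)
    then show "y \<in> A"
      unfolding A_def by (auto simp: in_keys_iff)
  qed
  have "lookup (lin_ext g (lin_ext h f)) k =
      (\<Sum>y\<in>A. (\<Sum>x\<in>keys f. lookup f x * lookup (h x) y) * lookup (g y) k)"
    by (subst lookup_lin_ext_superset[OF A(1) keys]) (simp add: lookup_lin_ext)
  also have "\<dots> = (\<Sum>x\<in>keys f. lookup f x * (\<Sum>y\<in>A. lookup (h x) y * lookup (g y) k))"
    by (simp add: sum_distrib_left sum_distrib_right mult.assoc sum.swap[of _ A])
  also have "\<dots> = (\<Sum>x\<in>keys f. lookup f x * lookup (lin_ext g (h x)) k)"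
    by (intro sum.cong refl) (simp add: lookup_lin_ext_superset[OF A])
  also have "\<dots> = lookup (lin_ext (\<lambda>x. lin_ext g (h x)) f) k"
    by (simp add: lookup_lin_ext)
  finally show "lookup (lin_ext g (lin_ext h f)) k = lookup (lin_ext (\<lambda>x. lin_ext g (h x)) f) k" .
qed

lemma sum_of_bool_eq_lookup:
  fixes f :: "'a \<Rightarrow>\<^sub>0 'b::semiring_1"
  shows "(\<Sum>x\<in>keys f. of_bool (x = a) * lookup f x) = lookup f a"
proof -
  have "(\<Sum>x\<in>keys f. of_bool (x = a) * lookup f x) = (\<Sum>x\<in>keys f. if a = x then lookup f x else 0)"
    by (intro sum.cong) auto
  also have "\<dots> = lookup f a"
    by (simp add: in_keys_iff)
  finally show ?thesis .
qed

lemma lookup_tensor: "lookup (tensor f g) (a, b) = lookup f a * lookup g b"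
proof -
  have "lookup (tensor f g) (a, b) =
      (\<Sum>x\<in>keys f. \<Sum>y\<in>keys g. (of_bool (x = a) * lookup f x) * (of_bool (y = b) * lookup g y))"
    unfolding tensor_def by (auto simp: lookup_sum lookup_single when_def intro!: sum.cong)
  also have "\<dots> = (\<Sum>x\<in>keys f. of_bool (x = a) * lookup f x) * (\<Sum>y\<in>keys g. of_bool (y = b) * lookup g y)"
    by (rule sum_product[symmetric])
  also have "\<dots> = lookup f a * lookup g b"
    by (simp add: sum_of_bool_eq_lookup)
  finally show ?thesis .
qed

lemma lookup_tensor_map:
  "lookup (tensor_map F G H) (a, b) =
    (\<Sum>p\<in>keys H. lookup H p * (lookup (F (single (fst p) 1)) a * lookup (G (single (snd p) 1)) b))"
  unfolding tensor_map_def lookup_lin_ext by (intro sum.cong refl) (auto simp: lookup_tensor split: prod.splits)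

lemma cmap_eq_lin_ext: "cmap \<Theta> = lin_ext (\<lambda>x. \<Sum>y\<in>cong_class \<Theta> x. single y 1)"
  unfolding cmap_def cong_class_def ..

lemma lookup_sum_single_one:
  "finite A \<Longrightarrow> lookup (\<Sum>x\<in>A. single x (1::'k::semiring_1)) y = of_bool (y \<in> A)"
  by (simp add: lookup_sum lookup_single when_def)

lemma lookup_cmap:
  "lookup (cmap \<Theta> f :: nat list \<Rightarrow>\<^sub>0 'k::field) y = (\<Sum>x\<in>keys f. lookup f x * of_bool (y \<in> cong_class \<Theta> x))"
  unfolding cmap_eq_lin_ext lookup_lin_ext lookup_sum_single_one[OF finite_cong_class] ..

lemma lookup_cmap_single:
  "lookup (cmap \<Theta> (single x 1) :: nat list \<Rightarrow>\<^sub>0 'k::field) y = of_bool (y \<in> cong_class \<Theta> x)"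
  unfolding cmap_eq_lin_ext lin_ext_single by (rule lookup_sum_single_one[OF finite_cong_class])

lemma lookup_tensor_map_rmap:
  "lookup (tensor_map (rmap \<Theta>) (rmap \<Theta>) (G :: nat list \<times> nat list \<Rightarrow>\<^sub>0 'k::field)) (u, v) =
    (if pi_down \<Theta> u = u \<and> pi_down \<Theta> v = v then lookup G (u, v) else 0)"
proof -
  have "lookup (rmap \<Theta> (single x 1) :: nat list \<Rightarrow>\<^sub>0 'k) y = of_bool (pi_down \<Theta> x = x \<and> y = x)" for x y
    unfolding rmap_def lin_ext_single by (simp add: lookup_single when_def)
  then have "lookup (tensor_map (rmap \<Theta>) (rmap \<Theta>) G) (u, v) =
      (\<Sum>p\<in>keys G. of_bool (pi_down \<Theta> u = u \<and> pi_down \<Theta> v = v) * (of_bool (p = (u, v)) * lookup G p))"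
    unfolding lookup_tensor_map by (intro sum.cong) auto
  also have "\<dots> = of_bool (pi_down \<Theta> u = u \<and> pi_down \<Theta> v = v) * lookup G (u, v)"
    by (simp only: sum_distrib_left[symmetric] sum_of_bool_eq_lookup)
  finally show ?thesis
    by simp
qed

lemma lookup_Delta_S_single:
  "lookup (Delta_S (single y 1) :: nat list \<times> nat list \<Rightarrow>\<^sub>0 'k::field) (a, b) = of_bool (splits_as y a b)"
proof -
  have "lookup (Delta_S (single y 1) :: nat list \<times> nat list \<Rightarrow>\<^sub>0 'k) (a, b) =
      (\<Sum>p\<in>{0..length y}. of_bool (p = length a \<and> splits_as y a b))"
    unfolding Delta_S_def lin_ext_single lookup_sum
    by (intro sum.cong) (auto simp: splits_as_def lookup_single when_def)
  also have "\<dots> = of_bool (splits_as y a b)"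
    by (auto simp: splits_as_def)
  finally show ?thesis .
qed

lemma lookup_Delta_S_cmap:
  "lookup (Delta_S (cmap \<Theta> f) :: nat list \<times> nat list \<Rightarrow>\<^sub>0 'k::field) (a, b) =
    (\<Sum>x\<in>keys f. lookup f x * of_nat (split_count \<Theta> x a b))"
proof -
  have "Delta_S (cmap \<Theta> f) = lin_ext (\<lambda>x. \<Sum>y\<in>cong_class \<Theta> x. Delta_S (single y 1)) f"
    unfolding cmap_eq_lin_ext Delta_S_def lin_ext_lin_ext lin_ext_indicator[OF finite_cong_class]
      lin_ext_single ..
  moreover have "lookup (\<Sum>y\<in>cong_class \<Theta> x. Delta_S (single y 1) :: nat list \<times> nat list \<Rightarrow>\<^sub>0 'k) (a, b) =
      of_nat (split_count \<Theta> x a b)" for x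
    unfolding lookup_sum lookup_Delta_S_single split_count_def
    by (simp add: of_bool_def flip: sum.inter_filter[OF finite_cong_class])
  ultimately show ?thesis
    by (simp add: lookup_lin_ext)
qed

lemma lookup_Delta_S_cmap_nonzeroD:
  assumes "lookup (Delta_S (cmap \<Theta> f) :: nat list \<times> nat list \<Rightarrow>\<^sub>0 'k::field) (a, b) \<noteq> 0"
  shows "a \<in> perms (length a) \<and> b \<in> perms (length b)"
proof -
  obtain x where "lookup f x * of_nat (split_count \<Theta> x a b) \<noteq> (0::'k)"
    using assms unfolding lookup_Delta_S_cmap by (meson sum.not_neutral_contains_not_neutral)
  then have "split_count \<Theta> x a b \<noteq> 0"
    by (metis mult_zero_right of_nat_0)
  then show ?thesis
    using split_count_nonzeroD by blast
qed

section \<open>The embedding of the class minima\<close>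

lemma mem_Zall_iff: "x \<in> Zall \<Theta> \<longleftrightarrow> x \<in> perms (length x) \<and> pi_down \<Theta> x = x"
  unfolding Zall_def Zset_def using length_perms by blast

context lattice_congruences
begin

lemma lookup_Delta_S_cmap_pi_down:
  assumes "insertional \<Theta>" "a \<in> perms (length a)" "b \<in> perms (length b)"
  shows "lookup (Delta_S (cmap \<Theta> f) :: nat list \<times> nat list \<Rightarrow>\<^sub>0 'k::field) (pi_down \<Theta> a, pi_down \<Theta> b) =
    lookup (Delta_S (cmap \<Theta> f)) (a, b)"
  unfolding lookup_Delta_S_cmap
  using split_count_cong[OF assms(1) cong_sym[OF cong_pi_down[OF assms(2)]] cong_sym[OF cong_pi_down[OF assms(3)]]]
  by simp

lemma lookup_cmap_Zall:
  fixes f :: "nat list \<Rightarrow>\<^sub>0 'k::field"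
  assumes f: "keys f \<subseteq> Zall \<Theta>" and z: "z \<in> Zall \<Theta>"
  shows "lookup (cmap \<Theta> f) z = lookup f z"
proof -
  have "lookup (cmap \<Theta> f) z = (\<Sum>x\<in>keys f. lookup f x * of_bool (z \<in> cong_class \<Theta> x))"
    by (rule lookup_cmap)
  also have "\<dots> = (\<Sum>x\<in>keys f. of_bool (x = z) * lookup f x)"
  proof (intro sum.cong refl)
    fix x assume "x \<in> keys f"
    then have x: "pi_down \<Theta> x = x"
      using f mem_Zall_iff by blast
    have "z \<in> perms (length z)" "pi_down \<Theta> z = z"
      using z mem_Zall_iff by auto
    then have "z \<in> cong_class \<Theta> x \<longleftrightarrow> x = z"
      unfolding mem_cong_class_iff[OF x] by auto
    then show "lookup f x * of_bool (z \<in> cong_class \<Theta> x) = of_bool (x = z) * lookup f x"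
      by simp
  qed
  also have "\<dots> = lookup f z"
    by (rule sum_of_bool_eq_lookup)
  finally show ?thesis .
qed

lemma inj_on_cmap: "inj_on (cmap \<Theta> :: (nat list \<Rightarrow>\<^sub>0 'k::field) \<Rightarrow> _) {f. keys f \<subseteq> Zall \<Theta>}"
proof (rule inj_onI)
  fix f g :: "nat list \<Rightarrow>\<^sub>0 'k"
  assume f: "f \<in> {f. keys f \<subseteq> Zall \<Theta>}" and g: "g \<in> {f. keys f \<subseteq> Zall \<Theta>}"
    and eq: "cmap \<Theta> f = cmap \<Theta> g"
  show "f = g"
  proof (rule poly_mapping_eqI)
    fix z
    show "lookup f z = lookup g z"
    proof (cases "z \<in> Zall \<Theta>")
      case True
      then show ?thesis
        using lookup_cmap_Zall f g eq by (metis mem_Collect_eq)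
    next
      case False
      then have "z \<notin> keys f" "z \<notin> keys g"
        using f g by auto
      then show ?thesis
        by (simp add: in_keys_iff)
    qed
  qed
qed

lemma tensor_map_cmap_rmap_fixed:
  fixes G :: "nat list \<times> nat list \<Rightarrow>\<^sub>0 'k::field"
  assumes supp: "\<And>a b. lookup G (a, b) \<noteq> 0 \<Longrightarrow> a \<in> perms (length a) \<and> b \<in> perms (length b)"
    and class_inv: "\<And>a b. a \<in> perms (length a) \<Longrightarrow> b \<in> perms (length b) \<Longrightarrow>
      lookup G (pi_down \<Theta> a, pi_down \<Theta> b) = lookup G (a, b)"
  shows "tensor_map (cmap \<Theta>) (cmap \<Theta>) (tensor_map (rmap \<Theta>) (rmap \<Theta>) G) = G"
proof (rule poly_mapping_eqI)
  fix k :: "nat list \<times> nat list"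
  obtain a b where k: "k = (a, b)"
    by fastforce
  define H where "H = tensor_map (rmap \<Theta>) (rmap \<Theta>) G"
  define P where "P \<longleftrightarrow> a \<in> perms (length a) \<and> b \<in> perms (length b)"
  have "lookup (tensor_map (cmap \<Theta>) (cmap \<Theta>) H) (a, b) =
      (\<Sum>p\<in>keys H. of_bool P * (of_bool (p = (pi_down \<Theta> a, pi_down \<Theta> b)) * lookup H p))"
    unfolding lookup_tensor_map
  proof (intro sum.cong refl)
    fix p assume "p \<in> keys H"
    then have "pi_down \<Theta> (fst p) = fst p" "pi_down \<Theta> (snd p) = snd p"
      unfolding H_def in_keys_iff using lookup_tensor_map_rmap[of \<Theta> G "fst p" "snd p"] by (auto split: if_splits)
    then show "lookup H p * (lookup (cmap \<Theta> (single (fst p) 1)) a * lookup (cmap \<Theta> (single (snd p) 1)) b) =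
        of_bool P * (of_bool (p = (pi_down \<Theta> a, pi_down \<Theta> b)) * lookup H p)"
      unfolding lookup_cmap_single P_def using mem_cong_class_iff by (cases p) auto
  qed
  also have "\<dots> = of_bool P * lookup H (pi_down \<Theta> a, pi_down \<Theta> b)"
    by (simp only: sum_distrib_left[symmetric] sum_of_bool_eq_lookup)
  also have "\<dots> = lookup G (a, b)"
    using supp[of a b] class_inv[of a b] pi_down_idem pi_down_perms
    unfolding H_def lookup_tensor_map_rmap P_def by auto
  finally show "lookup (tensor_map (cmap \<Theta>) (cmap \<Theta>) H) k = lookup G k"
    unfolding k .
qed

end

theorem theorem1p3:
  fixes \<Theta> :: "nat \<Rightarrow> (nat list \<times> nat list) set"
  assumes cong: "\<And>n. lattice_congruence n (\<Theta> n)"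
    and ins: "insertional \<Theta>"
  shows "inj_on (cmap \<Theta> :: (nat list \<Rightarrow>\<^sub>0 'k::field) \<Rightarrow> _) {f. Poly_Mapping.keys f \<subseteq> Zall \<Theta>}
    \<and> (\<forall>f :: nat list \<Rightarrow>\<^sub>0 'k. Poly_Mapping.keys f \<subseteq> Zall \<Theta> \<longrightarrow>
         tensor_map (cmap \<Theta>) (cmap \<Theta>) (Delta_Z \<Theta> f) = Delta_S (cmap \<Theta> f))"
proof -
  interpret lattice_congruences \<Theta>
    using cong by unfold_locales
  \<comment> \<open>the coalgebra identity holds for every \<open>f\<close>; the support condition is needed only for injectivity\<close>
  have "tensor_map (cmap \<Theta>) (cmap \<Theta>) (Delta_Z \<Theta> f) = Delta_S (cmap \<Theta> f)" for f :: "nat list \<Rightarrow>\<^sub>0 'k"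
    unfolding Delta_Z_def comp_apply
    using lookup_Delta_S_cmap_nonzeroD lookup_Delta_S_cmap_pi_down[OF ins]
    by (rule tensor_map_cmap_rmap_fixed)
  then show ?thesis
    using inj_on_cmap by blast
qed

end
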